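(* Let $\mathcal{X} = \{x_1, \dots, x_N\}$ be a finite set and let $P_{\mathrm{coor}}$ be a symmetric joint probability distribution on $\mathcal{X} \times \mathcal{X}$ with marginal $P(x) = \sum_{x'} P_{\mathrm{coor}}(x, x')$, and assume $P_{\mathrm{coor}}(x_i,x_j) > 0$ for all $i,j$. Let $K \in \mathbb{R}^{N\times N}$ be the PMI matrix $K_{ij} = \log \frac{P_{\mathrm{coor}}(x_i, x_j)}{P(x_i)P(x_j)}$. Suppose there are $\rho_{\min} > 0$ and $\delta \ge 0$ with $[\log \rho_{\min}, \log \rho_{\min} + \delta] \subseteq (-\infty, 0]$ such that every off-diagonal entry satisfies $\log \rho_{\min} \le K_{ij} \le \log \rho_{\min} + \delta$ for $i \ne j$. If $$\frac{P_{\mathrm{coor}}(x_i, x_i)}{P(x_i)^2} \ge e^{N\delta} \rho_{\min} \quad \text{for all } i = 1,\dots,N,$$ then there exists a constant $C \in \mathbb{R}$ such that the matrix $K + C\,\mathbf{1}\mathbf{1}^\top$ (i.e. $C$ added to every entry of $K$) is positive semi-definite. Consequently there is a map $f : \mathcal{X} \to \mathbb{R}^N$ with $\langle f(x_a), f(x_b)\rangle = K_{\mathrm{PMI}}(x_a, x_b) + C$ for all $x_a, x_b \in \mathcal{X}$.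
   Context: $K_{\mathrm{PMI}}(x_a,x_b) = \log \frac{P_{\mathrm{coor}}(x_a, x_b)}{P(x_a)P(x_b)}$ denotes the pointwise mutual information kernel of the cooccurrence distribution $P_{\mathrm{coor}}$; $\mathbf{1}$ is the all-ones vector in $\mathbb{R}^N$. *)

theory Defs
  imports "HOL-Analysis.Analysis"
begin

definition marginal :: "('a::finite \<Rightarrow> 'a \<Rightarrow> real) \<Rightarrow> 'a \<Rightarrow> real" where
  "marginal Pc x = (\<Sum>x'\<in>UNIV. Pc x x')"

definition pmi_kernel :: "('a::finite \<Rightarrow> 'a \<Rightarrow> real) \<Rightarrow> 'a \<Rightarrow> 'a \<Rightarrow> real" where
  "pmi_kernel Pc a b = ln (Pc a b / (marginal Pc a * marginal Pc b))"

definition psd_matrix :: "('a::finite \<Rightarrow> 'a \<Rightarrow> real) \<Rightarrow> bool" where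
  "psd_matrix M \<longleftrightarrow> (\<forall>i j. M i j = M j i) \<and>
     (\<forall>v :: 'a \<Rightarrow> real. 0 \<le> (\<Sum>i\<in>UNIV. \<Sum>j\<in>UNIV. v i * M i j * v j))"

end

theory Submission
  imports Defs
begin

text \<open>Shifting the PMI matrix by \<open>-ln \<rho>min\<close> puts its off-diagonal entries into \<open>[0, \<delta>]\<close>
  and its diagonal entries above \<open>N \<delta>\<close>. Since \<open>|v\<^sub>i M\<^sub>i\<^sub>j v\<^sub>j| \<le> \<delta> (v\<^sub>i\<^sup>2 + v\<^sub>j\<^sup>2) / 2\<close>
  off the diagonal, the quadratic form is bounded below by \<open>\<Sum>\<^sub>i (M\<^sub>i\<^sub>i - (N - 1) \<delta>) v\<^sub>i\<^sup>2 \<ge> 0\<close>,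
  so the shifted matrix is positive semi-definite. A Gram representation
  \<open>M\<^sub>i\<^sub>j = \<langle>f i, f j\<rangle>\<close> in \<open>\<real>\<^sup>N\<close> then follows by a Cholesky-type induction that
  splits off one index at a time and passes to the Schur complement.\<close>

definition quad_form :: "'a set \<Rightarrow> ('a \<Rightarrow> 'a \<Rightarrow> real) \<Rightarrow> ('a \<Rightarrow> real) \<Rightarrow> real" where
  "quad_form S M v = (\<Sum>i\<in>S. \<Sum>j\<in>S. v i * M i j * v j)"

definition psd_on :: "'a set \<Rightarrow> ('a \<Rightarrow> 'a \<Rightarrow> real) \<Rightarrow> bool" where
  "psd_on S M \<longleftrightarrow> (\<forall>v. 0 \<le> quad_form S M v)"

lemma psd_matrix_iff_psd_on_UNIV:
  "psd_matrix M \<longleftrightarrow> (\<forall>i j. M i j = M j i) \<and> psd_on UNIV M"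
  unfolding psd_matrix_def psd_on_def quad_form_def ..

lemma quad_form_cong: "(\<And>i. i \<in> S \<Longrightarrow> v i = w i) \<Longrightarrow> quad_form S M v = quad_form S M w"
  unfolding quad_form_def by (intro sum.cong refl) auto

lemma quad_form_insert:
  assumes "finite S" "k \<notin> S" "\<And>i j. M i j = M j i"
  shows "quad_form (insert k S) M w
           = w k * w k * M k k + 2 * w k * (\<Sum>j\<in>S. M k j * w j) + quad_form S M w"
proof -
  have "quad_form (insert k S) M w
      = (\<Sum>j\<in>insert k S. w k * M k j * w j) + (\<Sum>i\<in>S. \<Sum>j\<in>insert k S. w i * M i j * w j)"
    unfolding quad_form_def using assms by simp
  also have "(\<Sum>j\<in>insert k S. w k * M k j * w j) = w k * M k k * w k + (\<Sum>j\<in>S. w k * M k j * w j)"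
    using assms by simp
  also have "(\<Sum>i\<in>S. \<Sum>j\<in>insert k S. w i * M i j * w j) = (\<Sum>i\<in>S. w i * M i k * w k) + quad_form S M w"
    unfolding quad_form_def using assms by (simp add: sum.distrib)
  also have "(\<Sum>i\<in>S. w i * M i k * w k) = w k * (\<Sum>j\<in>S. M k j * w j)"
    by (simp add: sum_distrib_left assms(3)[of _ k] mult_ac)
  also have "(\<Sum>j\<in>S. w k * M k j * w j) = w k * (\<Sum>j\<in>S. M k j * w j)"
    by (simp add: sum_distrib_left mult_ac)
  finally show ?thesis by (simp add: algebra_simps)
qed

lemma psd_on_diag_nonneg:
  assumes "finite S" "k \<notin> S" "\<And>i j. M i j = M j i" "psd_on (insert k S) M"
  shows "0 \<le> M k k"
proof -
  define e where "e = (\<lambda>x. if x = k then 1 else (0::real))"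
  have "\<forall>j\<in>S. e j = 0" using assms(2) by (auto simp: e_def)
  then have "quad_form S M e = 0" "(\<Sum>j\<in>S. M k j * e j) = 0"
    by (simp_all add: quad_form_def)
  then have "quad_form (insert k S) M e = M k k"
    using quad_form_insert[of S k M, OF assms(1-3), of e] by (simp add: e_def)
  then show ?thesis using assms(4) unfolding psd_on_def by metis
qed

lemma psd_on_zero_diag_imp_zero_row:
  assumes "finite S" "k \<notin> S" "\<And>i j. M i j = M j i" "psd_on (insert k S) M"
    and "M k k = 0" "i \<in> S"
  shows "M i k = 0"
proof (rule ccontr)
  assume ne: "M i k \<noteq> 0"
  \<comment> \<open>\<open>w = e\<^sub>i + t e\<^sub>k\<close> has quadratic form \<open>M\<^sub>i\<^sub>i + 2 t M\<^sub>i\<^sub>k\<close>, which is \<open>-1\<close> for this \<open>t\<close>.\<close>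
  define t where "t = - (M i i + 1) / (2 * M i k)"
  define w where "w = (\<lambda>x. if x = k then t else if x = i then 1 else (0::real))"
  have wS: "\<And>j. j \<in> S \<Longrightarrow> w j = (if j = i then 1 else 0)"
    using assms(2) unfolding w_def by auto
  have "(\<Sum>j\<in>S. M k j * w j) = (\<Sum>j\<in>S. if j = i then M k j else 0)"
    by (rule sum.cong) (simp_all add: wS)
  then have row: "(\<Sum>j\<in>S. M k j * w j) = M k i"
    using assms(1,6) by (simp add: sum.delta')
  have entry: "\<And>a b. a \<in> S \<Longrightarrow> b \<in> S \<Longrightarrow>
      w a * M a b * w b = (if a = i then (if b = i then M i i else 0) else 0)"
    by (simp add: wS)
  have "quad_form S M w = (\<Sum>a\<in>S. if a = i then (\<Sum>b\<in>S. if b = i then M i i else 0) else 0)"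
    unfolding quad_form_def by (intro sum.cong refl) (simp add: entry)
  then have rest: "quad_form S M w = M i i"
    using assms(1,6) by (simp add: sum.delta')
  have "quad_form (insert k S) M w = 2 * t * M i k + M i i"
    using quad_form_insert[of S k M, OF assms(1-3), of w] row rest assms(5) assms(3)[of k i]
    by (simp add: w_def)
  also have "\<dots> = -1" using ne by (simp add: t_def field_simps)
  finally show False using assms(4) unfolding psd_on_def by (metis neg_0_le_iff_le not_one_le_zero)
qed

lemma schur_complement_psd_on:
  assumes "finite S" "k \<notin> S" "\<And>i j. M i j = M j i" "psd_on (insert k S) M"
  shows "psd_on S (\<lambda>i j. M i j - M i k * M k j / M k k)"
  unfolding psd_on_def
proof
  fix v
  define b where "b = (\<Sum>j\<in>S. M k j * v j)"
  \<comment> \<open>The value at \<open>k\<close> minimizing the form over \<open>insert k S\<close>; when \<open>M k k = 0\<close> it is \<open>0\<close>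
     and the correction term \<open>b\<^sup>2 / M k k\<close> vanishes as well.\<close>
  define w where "w = v(k := - b / M k k)"
  have wb: "(\<Sum>j\<in>S. M k j * w j) = b"
    unfolding b_def w_def using assms(2) by (intro sum.cong) auto
  have qw: "quad_form S M w = quad_form S M v"
    using assms(2) by (intro quad_form_cong) (auto simp: w_def)
  have col: "(\<Sum>i\<in>S. v i * M i k) = b"
    unfolding b_def by (rule sum.cong) (simp_all add: assms(3)[of _ k] mult.commute)
  have "(\<Sum>i\<in>S. \<Sum>j\<in>S. v i * M i k * M k j * v j / M k k)
      = (\<Sum>i\<in>S. v i * M i k) * (\<Sum>j\<in>S. M k j * v j) / M k k"
    by (simp add: sum_product sum_divide_distrib mult.assoc)
  also have "\<dots> = b * b / M k k" by (simp add: col b_def)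
  finally have "(\<Sum>i\<in>S. \<Sum>j\<in>S. v i * M i k * M k j * v j / M k k) = b * b / M k k" .
  then have "quad_form S (\<lambda>i j. M i j - M i k * M k j / M k k) v = quad_form S M v - b * b / M k k"
    unfolding quad_form_def by (simp add: algebra_simps sum_subtractf)
  also have "\<dots> = quad_form (insert k S) M w"
    using quad_form_insert[of S k M, OF assms(1-3), of w] wb qw
    by (cases "M k k = 0") (auto simp: w_def field_simps)
  finally show "0 \<le> quad_form S (\<lambda>i j. M i j - M i k * M k j / M k k) v"
    using assms(4) unfolding psd_on_def by metis
qed

lemma gram_vectors_insert:
  fixes M :: "'a::finite \<Rightarrow> 'a \<Rightarrow> real" and g :: "'a \<Rightarrow> real^'a"
  assumes fin: "finite S" and kS: "k \<notin> S" and sym: "\<And>i j. M i j = M j i"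
    and psd: "psd_on (insert k S) M"
    and g: "\<forall>i\<in>S. \<forall>j\<in>S. inner (g i) (g j) = M i j - M i k * M k j / M k k"
    and g_supp: "\<forall>i c. c \<notin> S \<longrightarrow> g i $ c = 0"
  shows "\<exists>f::'a \<Rightarrow> real^'a. (\<forall>i\<in>insert k S. \<forall>j\<in>insert k S. inner (f i) (f j) = M i j)
           \<and> (\<forall>i c. c \<notin> insert k S \<longrightarrow> f i $ c = 0)"
proof -
  have Mkk: "0 \<le> M k k" by (rule psd_on_diag_nonneg[OF fin kS sym psd])
  define e :: "real^'a" where "e = axis k 1"
  define r where "r i = (if i = k then sqrt (M k k) else M i k / sqrt (M k k))" for i
  define h where "h i = (if i = k then 0 else g i)" for i
  define f where "f i = h i + r i *\<^sub>R e" for i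
  have he: "inner (h i) e = 0" for i
    using g_supp kS by (simp add: h_def e_def inner_axis)
  have ee: "inner e e = 1" by (simp add: e_def inner_axis_axis)
  have eh: "inner e (h i) = 0" for i
    using he by (simp add: inner_commute)
  have f_inner: "inner (f i) (f j) = inner (h i) (h j) + r i * r j" for i j
    unfolding f_def by (simp add: inner_add_left inner_add_right he eh ee)
  \<comment> \<open>When \<open>M k k = 0\<close> the whole row \<open>k\<close> vanishes, so the \<open>sqrt\<close>-normalization loses nothing.\<close>
  have r_k: "r i * r k = M i k" if "i \<in> insert k S" for i
  proof (cases "M k k = 0")
    case True
    then have "M i k = 0"
      using that psd_on_zero_diag_imp_zero_row[OF fin kS sym psd True] by (cases "i = k") auto
    with True show ?thesis by (simp add: r_def)
  next
    case False
    with Mkk have "sqrt (M k k) \<noteq> 0" "sqrt (M k k) * sqrt (M k k) = M k k" by simp_all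
    then show ?thesis by (simp add: r_def)
  qed
  have r_S: "r i * r j = M i k * M k j / M k k" if "i \<in> S" "j \<in> S" for i j
  proof -
    \<comment> \<open>Also valid for \<open>r k = 0\<close>: then both sides are \<open>0\<close> by division by zero.\<close>
    have "r i * r j = (r i * r k) * (r j * r k) / (r k * r k)"
      using that kS by (simp add: r_def)
    also have "\<dots> = M i k * M k j / M k k"
      using that r_k[of i] r_k[of j] r_k[of k] sym[of j k] by simp
    finally show ?thesis .
  qed
  have "inner (f i) (f j) = M i j" if "i \<in> insert k S" "j \<in> insert k S" for i j
  proof (cases "i = k \<or> j = k")
    case True
    then have "r i * r j = M i j"
      using that r_k sym[of j k] by (auto simp: mult.commute)
    with True show ?thesis by (auto simp: f_inner h_def)
  next
    case False
    with that have "i \<in> S" "j \<in> S" by auto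
    with False g r_S show ?thesis by (simp add: f_inner h_def)
  qed
  moreover have "\<forall>i c. c \<notin> insert k S \<longrightarrow> f i $ c = 0"
    using g_supp by (auto simp: f_def h_def e_def axis_def)
  ultimately show ?thesis by blast
qed

lemma gram_vectors_exist_on:
  fixes M :: "'a::finite \<Rightarrow> 'a \<Rightarrow> real"
  assumes "finite S" "\<And>i j. M i j = M j i" "psd_on S M"
  shows "\<exists>f::'a \<Rightarrow> real^'a. (\<forall>i\<in>S. \<forall>j\<in>S. inner (f i) (f j) = M i j)
           \<and> (\<forall>i c. c \<notin> S \<longrightarrow> f i $ c = 0)"
  using assms
proof (induction S arbitrary: M rule: finite_induct)
  case empty
  show ?case by (intro exI[of _ "\<lambda>_. 0"]) auto
next
  case (insert k S)
  have "\<And>i j. M i j - M i k * M k j / M k k = M j i - M j k * M k i / M k k"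
    using insert.prems(1) by (metis mult.commute)
  from insert.IH[OF this schur_complement_psd_on[OF insert(1,2) insert.prems]]
  obtain g :: "'a \<Rightarrow> real^'a"
    where "\<forall>i\<in>S. \<forall>j\<in>S. inner (g i) (g j) = M i j - M i k * M k j / M k k"
      and "\<forall>i c. c \<notin> S \<longrightarrow> g i $ c = 0"
    by blast
  then show ?case by (rule gram_vectors_insert[OF insert(1,2) insert.prems])
qed

lemma psd_matrix_gram:
  fixes M :: "'a::finite \<Rightarrow> 'a \<Rightarrow> real"
  assumes "psd_matrix M"
  shows "\<exists>f::'a \<Rightarrow> real^'a. \<forall>i j. inner (f i) (f j) = M i j"
  using gram_vectors_exist_on[of UNIV M] assms
  unfolding psd_matrix_iff_psd_on_UNIV by auto

lemma mult_ge_neg_half_sum_squares: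
  fixes m d x y :: real
  assumes "\<bar>m\<bar> \<le> d"
  shows "- (d * (x\<^sup>2 + y\<^sup>2)) / 2 \<le> x * m * y"
proof -
  have "0 \<le> d" using assms by linarith
  have "2 * \<bar>x * y\<bar> \<le> x\<^sup>2 + y\<^sup>2"
    using sum_squares_bound[of "\<bar>x\<bar>" "\<bar>y\<bar>"] by (simp add: abs_mult)
  then have "d * (2 * \<bar>x * y\<bar>) \<le> d * (x\<^sup>2 + y\<^sup>2)"
    using \<open>0 \<le> d\<close> by (rule mult_left_mono)
  moreover have "\<bar>x * m * y\<bar> \<le> d * \<bar>x * y\<bar>"
    using assms by (simp add: abs_mult mult_right_mono mult.commute mult.left_commute)
  ultimately show ?thesis by linarith
qed

lemma psd_matrix_if_diagonally_dominant:
  fixes M :: "'a::finite \<Rightarrow> 'a \<Rightarrow> real" and \<delta> :: real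
  assumes sym: "\<And>i j. M i j = M j i"
    and off_diag: "\<And>i j. i \<noteq> j \<Longrightarrow> \<bar>M i j\<bar> \<le> \<delta>"
    and diag: "\<And>i. (real CARD('a) - 1) * \<delta> \<le> M i i"
  shows "psd_matrix M"
  unfolding psd_matrix_iff_psd_on_UNIV psd_on_def
proof (intro conjI allI sym)
  fix v :: "'a \<Rightarrow> real"
  define N where "N = real CARD('a)"
  \<comment> \<open>Subtracting \<open>\<delta> (v\<^sub>i\<^sup>2 + v\<^sub>j\<^sup>2) / 2\<close> also on the diagonal makes the lower bound a uniform sum.\<close>
  define L where "L i j = - (\<delta> / 2) * ((v i)\<^sup>2 + (v j)\<^sup>2) + (if i = j then (M i i + \<delta>) * (v i)\<^sup>2 else 0)"
    for i j
  have "(\<Sum>i\<in>UNIV. \<Sum>j\<in>UNIV. L i j)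
      = - (\<delta> / 2) * (\<Sum>i\<in>UNIV. \<Sum>j\<in>UNIV. (v i)\<^sup>2 + (v j)\<^sup>2) + (\<Sum>i\<in>UNIV. (M i i + \<delta>) * (v i)\<^sup>2)"
    unfolding L_def by (simp only: sum.distrib sum_distrib_left[symmetric]) simp
  also have "(\<Sum>i\<in>UNIV. \<Sum>j\<in>UNIV. (v i)\<^sup>2 + (v j)\<^sup>2) = 2 * N * (\<Sum>i\<in>UNIV. (v i)\<^sup>2)"
    by (simp add: sum.distrib N_def sum_distrib_left mult.assoc)
  also have "- (\<delta> / 2) * (2 * N * (\<Sum>i\<in>UNIV. (v i)\<^sup>2)) = (\<Sum>i\<in>UNIV. - (N * \<delta>) * (v i)\<^sup>2)"
    by (simp add: sum_distrib_left mult_ac)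
  finally have L_sum: "(\<Sum>i\<in>UNIV. \<Sum>j\<in>UNIV. L i j) = (\<Sum>i\<in>UNIV. (M i i + \<delta> - N * \<delta>) * (v i)\<^sup>2)"
    by (simp add: algebra_simps sum.distrib[symmetric])
  have "L i j \<le> v i * M i j * v j" for i j
    using mult_ge_neg_half_sum_squares[OF off_diag, of i j "v i" "v j"]
    by (cases "i = j") (auto simp: L_def power2_eq_square algebra_simps)
  then have "(\<Sum>i\<in>UNIV. \<Sum>j\<in>UNIV. L i j) \<le> quad_form UNIV M v"
    unfolding quad_form_def by (intro sum_mono)
  moreover have "0 \<le> (\<Sum>i\<in>UNIV. (M i i + \<delta> - N * \<delta>) * (v i)\<^sup>2)"
    using diag by (intro sum_nonneg mult_nonneg_nonneg) (auto simp: N_def algebra_simps)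
  ultimately show "0 \<le> quad_form UNIV M v" by (simp add: L_sum)
qed

lemma pmi_kernel_sym:
  assumes "\<And>x y. Pc x y = Pc y x"
  shows "pmi_kernel Pc a b = pmi_kernel Pc b a"
  unfolding pmi_kernel_def using assms by (simp add: mult.commute)

lemma ln_le_pmi_kernel_diag:
  assumes "0 < r" "r \<le> Pc i i / (marginal Pc i)\<^sup>2"
  shows "ln r \<le> pmi_kernel Pc i i"
  using assms unfolding pmi_kernel_def by (simp add: power2_eq_square)

theorem mainTheorem1:
  fixes Pc :: "'a::finite \<Rightarrow> 'a \<Rightarrow> real"
    and \<rho>min \<delta> :: real
  assumes sym: "\<And>x y. Pc x y = Pc y x"
    and pos: "\<And>x y. Pc x y > 0"
    and total: "(\<Sum>x\<in>UNIV. \<Sum>y\<in>UNIV. Pc x y) = 1"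
    and rho_pos: "\<rho>min > 0"
    and delta_nonneg: "\<delta> \<ge> 0"
    and interval_nonpos: "ln \<rho>min + \<delta> \<le> 0"
    and offdiag: "\<And>i j. i \<noteq> j \<Longrightarrow>
        ln \<rho>min \<le> pmi_kernel Pc i j \<and> pmi_kernel Pc i j \<le> ln \<rho>min + \<delta>"
    and diag: "\<And>i. Pc i i / (marginal Pc i)^2 \<ge> exp (real CARD('a) * \<delta>) * \<rho>min"
  shows "\<exists>C::real. psd_matrix (\<lambda>i j. pmi_kernel Pc i j + C) \<and>
           (\<exists>f :: 'a \<Rightarrow> real ^ 'a. \<forall>a b. inner (f a) (f b) = pmi_kernel Pc a b + C)"
proof -
  define C where "C = - ln \<rho>min"
  have "psd_matrix (\<lambda>i j. pmi_kernel Pc i j + C)"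
  proof (rule psd_matrix_if_diagonally_dominant)
    show "pmi_kernel Pc i j + C = pmi_kernel Pc j i + C" for i j
      using pmi_kernel_sym[OF sym] by simp
    show "\<bar>pmi_kernel Pc i j + C\<bar> \<le> \<delta>" if "i \<noteq> j" for i j
      using offdiag[OF that] by (simp add: C_def)
    show "(real CARD('a) - 1) * \<delta> \<le> pmi_kernel Pc i i + C" for i
    proof -
      have "ln (exp (real CARD('a) * \<delta>) * \<rho>min) \<le> pmi_kernel Pc i i"
        using rho_pos diag by (intro ln_le_pmi_kernel_diag) auto
      then show ?thesis
        using rho_pos delta_nonneg by (simp add: ln_mult C_def algebra_simps)
    qed
  qed
  moreover from psd_matrix_gram[OF this]
  obtain f :: "'a \<Rightarrow> real^'a" where "\<forall>a b. inner (f a) (f b) = pmi_kernel Pc a b + C"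
    by blast
  ultimately show ?thesis by blast
qed

end
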